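(* If a finite simple graph $G$ with an even number of vertices is H$_2$--cordial, then the number of edges of $G$ is even.
   Context: For a positive integer $k$, an H$_k$--cordial labeling of a graph $G$ is a map $f:E(G)\to\mathbb{Z}$ such that, defining $f(v)=\sum_{e\in I(v)} f(e)$ for each vertex $v$ (where $I(v)$ is the set of edges incident to $v$), we have $1\le |f(e)|\le k$ for every edge $e$, $1\le |f(v)|\le k$ for every vertex $v$, and for each $i$ with $1\le i\le k$, $|e_f(i)-e_f(-i)|\le 1$ and $|v_f(i)-v_f(-i)|\le 1$; here $e_f(c)$ is the number of edges with label $c$ and $v_f(c)$ the number of vertices $v$ with $f(v)=c$. A graph is H$_k$--cordial if it admits an H$_k$--cordial labeling. *)

theory Defs
  imports Main
begin

definition simple_graph :: "'a set \<Rightarrow> 'a set set \<Rightarrow> bool" where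
  "simple_graph V E \<longleftrightarrow> finite V \<and> (\<forall>e\<in>E. e \<subseteq> V \<and> card e = 2)"

definition incident_edges :: "'a set set \<Rightarrow> 'a \<Rightarrow> 'a set set" where
  "incident_edges E v = {e \<in> E. v \<in> e}"

definition vertex_label :: "'a set set \<Rightarrow> ('a set \<Rightarrow> int) \<Rightarrow> 'a \<Rightarrow> int" where
  "vertex_label E f v = (\<Sum>e\<in>incident_edges E v. f e)"

definition edge_count :: "'a set set \<Rightarrow> ('a set \<Rightarrow> int) \<Rightarrow> int \<Rightarrow> nat" where
  "edge_count E f c = card {e \<in> E. f e = c}"

definition vertex_count :: "'a set \<Rightarrow> 'a set set \<Rightarrow> ('a set \<Rightarrow> int) \<Rightarrow> int \<Rightarrow> nat" where
  "vertex_count V E f c = card {v \<in> V. vertex_label E f v = c}"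

definition Hk_cordial_labeling :: "nat \<Rightarrow> 'a set \<Rightarrow> 'a set set \<Rightarrow> ('a set \<Rightarrow> int) \<Rightarrow> bool" where
  "Hk_cordial_labeling k V E f \<longleftrightarrow>
     (\<forall>e\<in>E. 1 \<le> \<bar>f e\<bar> \<and> \<bar>f e\<bar> \<le> int k) \<and>
     (\<forall>v\<in>V. 1 \<le> \<bar>vertex_label E f v\<bar> \<and> \<bar>vertex_label E f v\<bar> \<le> int k) \<and>
     (\<forall>i::int. 1 \<le> i \<and> i \<le> int k \<longrightarrow>
        \<bar>int (edge_count E f i) - int (edge_count E f (-i))\<bar> \<le> 1 \<and>
        \<bar>int (vertex_count V E f i) - int (vertex_count V E f (-i))\<bar> \<le> 1)"

definition Hk_cordial :: "nat \<Rightarrow> 'a set \<Rightarrow> 'a set set \<Rightarrow> bool" where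
  "Hk_cordial k V E \<longleftrightarrow> (\<exists>f. Hk_cordial_labeling k V E f)"

end

theory Submission
  imports Defs
begin

text \<open>Every edge meets exactly two vertices, so the vertex labels sum to twice the edge
  labels; in particular their sum is even. For labels in \<open>{\<plusminus>1, \<plusminus>2}\<close> occurring \<open>n(i)\<close> times,
  with \<open>|n(i) - n(-i)| \<le> 1\<close>, the label sum \<open>n(1) - n(-1) + 2(n(2) - n(-2))\<close> vanishes exactly
  when both it and the number \<open>n(1) + n(-1) + n(2) + n(-2)\<close> of labelled objects are even.
  Applied to the vertices this forces the edge labels to sum to zero, and applied to the
  edges it then forces their number to be even.\<close>

definition H2_balanced :: "'b set \<Rightarrow> ('b \<Rightarrow> int) \<Rightarrow> bool" where
  "H2_balanced S g \<longleftrightarrow>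
     (\<forall>x\<in>S. 1 \<le> \<bar>g x\<bar> \<and> \<bar>g x\<bar> \<le> 2) \<and>
     (\<forall>i\<in>{1, 2}. \<bar>int (card {x\<in>S. g x = i}) - int (card {x\<in>S. g x = -i})\<bar> \<le> 1)"

lemma int_card_filter_eq_sum:
  "finite S \<Longrightarrow> int (card {x\<in>S. P x}) = (\<Sum>x\<in>S. of_bool (P x))"
  by (simp add: sum_of_bool_eq Collect_conj_eq Int_commute)

lemma sum_eq_label_counts:
  fixes g :: "'b \<Rightarrow> int"
  assumes "finite S" and "\<forall>x\<in>S. 1 \<le> \<bar>g x\<bar> \<and> \<bar>g x\<bar> \<le> 2"
  shows "sum g S = int (card {x\<in>S. g x = 1}) - int (card {x\<in>S. g x = -1})
           + 2 * (int (card {x\<in>S. g x = 2}) - int (card {x\<in>S. g x = -2}))"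
proof -
  have "sum g S = (\<Sum>x\<in>S. of_bool (g x = 1) - of_bool (g x = -1)
                     + 2 * (of_bool (g x = 2) - of_bool (g x = -2)))"
    using assms(2) by (intro sum.cong) (auto simp: abs_if split: if_splits)
  then show ?thesis
    using assms(1) by (simp add: int_card_filter_eq_sum sum.distrib sum_subtractf sum_distrib_left)
qed

lemma card_eq_label_counts:
  fixes g :: "'b \<Rightarrow> int"
  assumes "finite S" and "\<forall>x\<in>S. 1 \<le> \<bar>g x\<bar> \<and> \<bar>g x\<bar> \<le> 2"
  shows "int (card S) = int (card {x\<in>S. g x = 1}) + int (card {x\<in>S. g x = -1})
           + int (card {x\<in>S. g x = 2}) + int (card {x\<in>S. g x = -2})"
proof -
  have "int (card S) = (\<Sum>x\<in>S. 1)"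
    by simp
  also have "\<dots> = (\<Sum>x\<in>S. of_bool (g x = 1) + of_bool (g x = -1)
                      + of_bool (g x = 2) + of_bool (g x = -2))"
    using assms(2) by (intro sum.cong) (auto simp: abs_if split: if_splits)
  finally show ?thesis
    using assms(1) by (simp add: int_card_filter_eq_sum sum.distrib)
qed

lemma balanced_label_counts_sum_eq_0_iff:
  fixes a b c d :: int
  assumes "\<bar>a - b\<bar> \<le> 1" and "\<bar>c - d\<bar> \<le> 1"
  shows "a - b + 2 * (c - d) = 0 \<longleftrightarrow> even (a + b + c + d) \<and> even (a - b + 2 * (c - d))"
  using assms by presburger

lemma H2_balanced_sum_eq_0_iff:
  assumes "finite S" and "H2_balanced S g"
  shows "sum g S = 0 \<longleftrightarrow> even (card S) \<and> even (sum g S)"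
proof -
  have label_range: "\<forall>x\<in>S. 1 \<le> \<bar>g x\<bar> \<and> \<bar>g x\<bar> \<le> 2"
    and "\<bar>int (card {x\<in>S. g x = 1}) - int (card {x\<in>S. g x = -1})\<bar> \<le> 1"
    and "\<bar>int (card {x\<in>S. g x = 2}) - int (card {x\<in>S. g x = -2})\<bar> \<le> 1"
    using assms(2) unfolding H2_balanced_def by auto
  then have "sum g S = 0 \<longleftrightarrow> even (int (card S)) \<and> even (sum g S)"
    unfolding sum_eq_label_counts[OF assms(1) label_range] card_eq_label_counts[OF assms(1) label_range]
    by (intro balanced_label_counts_sum_eq_0_iff)
  then show ?thesis
    by simp
qed

lemma H2_cordial_labeling_balanced:
  assumes "Hk_cordial_labeling 2 V E f"
  shows "H2_balanced E f" and "H2_balanced V (vertex_label E f)"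
  using assms unfolding Hk_cordial_labeling_def H2_balanced_def edge_count_def vertex_count_def
  by auto

lemma simple_graph_finite_edges:
  assumes "simple_graph V E"
  shows "finite E"
proof -
  have "E \<subseteq> Pow V" and "finite V"
    using assms unfolding simple_graph_def by auto
  then show ?thesis
    by (meson finite_Pow_iff finite_subset)
qed

lemma simple_graph_sum_vertex_label:
  assumes "simple_graph V E"
  shows "(\<Sum>v\<in>V. vertex_label E f v) = 2 * sum f E"
proof -
  have "finite V" and sub: "\<And>e. e \<in> E \<Longrightarrow> e \<subseteq> V" and two: "\<And>e. e \<in> E \<Longrightarrow> card e = 2"
    using assms unfolding simple_graph_def by auto
  have "(\<Sum>v\<in>V. vertex_label E f v) = (\<Sum>v\<in>V. \<Sum>e\<in>{e\<in>E. v \<in> e}. f e)"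
    by (simp add: vertex_label_def incident_edges_def)
  also have "\<dots> = (\<Sum>e\<in>E. \<Sum>v\<in>{v\<in>V. v \<in> e}. f e)"
    using sum.swap_restrict[OF \<open>finite V\<close> simple_graph_finite_edges[OF assms],
        of "\<lambda>_ e. f e" "\<lambda>v e. v \<in> e"]
    by simp
  also have "\<dots> = (\<Sum>e\<in>E. 2 * f e)"
  proof (rule sum.cong[OF refl])
    fix e assume "e \<in> E"
    then have "{v\<in>V. v \<in> e} = e" using sub by auto
    then show "(\<Sum>v\<in>{v\<in>V. v \<in> e}. f e) = 2 * f e" using two[OF \<open>e \<in> E\<close>] by simp
  qed
  finally show ?thesis
    by (simp add: sum_distrib_left)
qed

theorem lemma3:
  fixes V :: "'a set" and E :: "'a set set"
  assumes "simple_graph V E"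
    and "even (card V)"
    and "Hk_cordial 2 V E"
  shows "even (card E)"
proof -
  obtain f where f: "Hk_cordial_labeling 2 V E f"
    using assms(3) unfolding Hk_cordial_def by blast
  have finite: "finite V" "finite E"
    using assms(1) simple_graph_finite_edges unfolding simple_graph_def by auto
  have handshake: "sum (vertex_label E f) V = 2 * sum f E"
    using simple_graph_sum_vertex_label[OF assms(1)] .
  have "sum (vertex_label E f) V = 0"
    using H2_balanced_sum_eq_0_iff[OF finite(1) H2_cordial_labeling_balanced(2)[OF f]]
      assms(2) handshake by simp
  then have "sum f E = 0"
    using handshake by simp
  then show ?thesis
    using H2_balanced_sum_eq_0_iff[OF finite(2) H2_cordial_labeling_balanced(1)[OF f]] by simp
qed

end
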